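(* Let $m,n\ge 1$, let $\lambda_1,\dots,\lambda_m>0$ and $d_1,\dots,d_n\in\mathbb{R}$, and let $\Phi\in\mathbb{C}^{m\times n}$ be the matrix with entries $\Phi_{kj}=e^{2\pi i d_j/\lambda_k}$. Let $v\in\mathbb{C}^m$, let $\epsilon>0$, and let $C\in\mathbb{R}^{2m\times 2m}$ be a symmetric positive definite (covariance) matrix. For a complex matrix $M\in\mathbb{C}^{m\times n}$ and a complex vector $w\in\mathbb{C}^m$, consider the optimization problem $$P(M,w):\quad \min_{x\in\mathbb{R}^n,\ x\ge 0}\ \|x\|_1 \quad\text{subject to}\quad (\widetilde{M}x-\widetilde{w})^T C^{-1}(\widetilde{M}x-\widetilde{w})\le \epsilon^2\|\widetilde{w}\|^2,$$ where $\widetilde{w}=\begin{pmatrix}\mathrm{Re}\,w\\ \mathrm{Im}\,w\end{pmatrix}\in\mathbb{R}^{2m}$ and $\widetilde{M}=\begin{pmatrix}\mathrm{Re}\,M\\ \mathrm{Im}\,M\end{pmatrix}\in\mathbb{R}^{2m\times n}$ (real and imaginary parts stacked), $x\ge 0$ is meant entrywise, and $\|\cdot\|$ is the Euclidean norm. For $s>0$ and $\Delta\in\mathbb{R}$ define the $m\times m$ complex diagonal matrix $$F_{s,\Delta}=s\cdot\mathrm{diag}\big(e^{-2\pi i\Delta/\lambda_1},\dots,e^{-2\pi i\Delta/\lambda_m}\big).$$ Let $x^*$ be the solution of $P(\Phi,v)$, and let $x^*_{s,\Delta}$ be the solution of $P(F_{s,\Delta}\Phi,\,F_{s,\Delta}v)$.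 Suppose that $C$ is diagonal and satisfies $C_{jj}=C_{j+m,j+m}$ for $j=1,\dots,m$. Then $x^*_{s,\Delta}=x^*$.
   Context: This arises in Time-of-Flight depth sensing: $v$ is the complex sensor measurement at $m$ modulation frequencies, $\lambda_k$ is half the wavelength of the $k$-th modulation frequency, $d_j$ ranges over a discretized set of candidate path distances, and $x$ (the "backscattering") gives nonnegative return strengths at those distances, so that ideally $v=\Phi x$ plus Gaussian noise with covariance $C$ on the stacked real representation. *)

theory Defs
  imports "HOL-Analysis.Analysis"
begin

text \<open>Complex vectors in C^m are complex^'m, complex m x n matrices are complex^'n^'m.
  The real 2m-dimensional space is indexed by the sum type 'm + 'm:
  Inl k is the k-th real part, Inr k the k-th imaginary part.\<close>

definition stack_vec :: "complex^'m \<Rightarrow> real^('m + 'm)" where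
  "stack_vec w = (\<chi> i. case i of Inl k \<Rightarrow> Re (w $ k) | Inr k \<Rightarrow> Im (w $ k))"

definition stack_mat :: "complex^'n^'m \<Rightarrow> real^'n^('m + 'm)" where
  "stack_mat M = (\<chi> i j. case i of Inl k \<Rightarrow> Re (M $ k $ j) | Inr k \<Rightarrow> Im (M $ k $ j))"

definition l1norm :: "real^'n \<Rightarrow> real" where
  "l1norm x = (\<Sum>j\<in>UNIV. \<bar>x $ j\<bar>)"

definition nonneg_vec :: "real^'n \<Rightarrow> bool" where
  "nonneg_vec x \<longleftrightarrow> (\<forall>j. 0 \<le> x $ j)"

definition feasible ::
  "real^('m+'m)^('m+'m) \<Rightarrow> real \<Rightarrow> complex^'n^'m \<Rightarrow> complex^'m \<Rightarrow> real^'n \<Rightarrow> bool" where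
  "feasible C \<epsilon> M w x \<longleftrightarrow> nonneg_vec x \<and>
     (let r = stack_mat M *v x - stack_vec w in
        r \<bullet> (matrix_inv C *v r) \<le> \<epsilon>\<^sup>2 * (norm (stack_vec w))\<^sup>2)"

definition is_solution ::
  "real^('m+'m)^('m+'m) \<Rightarrow> real \<Rightarrow> complex^'n^'m \<Rightarrow> complex^'m \<Rightarrow> real^'n \<Rightarrow> bool" where
  "is_solution C \<epsilon> M w x \<longleftrightarrow> feasible C \<epsilon> M w x \<and>
     (\<forall>y. feasible C \<epsilon> M w y \<longrightarrow> l1norm x \<le> l1norm y)"

definition Phi_mat :: "real^'m \<Rightarrow> real^'n \<Rightarrow> complex^'n^'m" where
  "Phi_mat lam d = (\<chi> k j. exp (2 * of_real pi * \<i> * of_real (d $ j) / of_real (lam $ k)))"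

definition F_mat :: "real^'m \<Rightarrow> real \<Rightarrow> real \<Rightarrow> complex^'m^'m" where
  "F_mat lam s \<Delta> = (\<chi> k l. if k = l
      then of_real s * exp (- 2 * of_real pi * \<i> * of_real \<Delta> / of_real (lam $ k)) else 0)"

end

theory Submission imports Defs begin

text \<open>With C diagonal and C(j,j) = C(j+m,j+m), the constraint of P(M,w) weights each complex
  residual component only through its modulus. Multiplying M and w by a diagonal matrix whose
  entries all have modulus s therefore scales both sides of the constraint by s^2, so P(M,w)
  and P(F M, F w) have the same feasible set, hence the same solutions.\<close>

definition diag_mat :: "('n \<Rightarrow> 'a::zero) \<Rightarrow> 'a^'n^'n" where
  "diag_mat f = (\<chi> i j. if i = j then f i else 0)"

lemma diag_mat_eq:
  fixes A :: "'a::zero^'n^'n"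
  assumes "\<forall>i j. i \<noteq> j \<longrightarrow> A $ i $ j = 0"
  shows "A = diag_mat (\<lambda>i. A $ i $ i)"
  using assms by (auto simp: vec_eq_iff diag_mat_def)

lemma diag_mat_mult_matrix_nth:
  fixes M :: "'a::semiring_1^'n^'m"
  shows "(diag_mat f ** M) $ k $ j = f k * M $ k $ j"
proof -
  have "(diag_mat f ** M) $ k $ j = (\<Sum>l\<in>UNIV. if l = k then f k * M $ k $ j else 0)"
    unfolding matrix_matrix_mult_def vec_lambda_beta
    by (rule sum.cong) (auto simp: diag_mat_def)
  then show ?thesis by simp
qed

lemma diag_mat_vector_mult_nth:
  fixes u :: "'a::semiring_1^'m"
  shows "(diag_mat f *v u) $ k = f k * u $ k"
proof -
  have "(diag_mat f *v u) $ k = (\<Sum>l\<in>UNIV. if l = k then f k * u $ k else 0)"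
    unfolding matrix_vector_mult_def vec_lambda_beta
    by (rule sum.cong) (auto simp: diag_mat_def)
  then show ?thesis by simp
qed

lemma diag_mat_mult_diag_mat:
  "diag_mat f ** diag_mat g = diag_mat (\<lambda>i. f i * g i :: 'a::semiring_1)"
  by (auto simp: vec_eq_iff diag_mat_mult_matrix_nth) (auto simp: diag_mat_def)

lemma matrix_inv_diag_mat:
  fixes f :: "'n::finite \<Rightarrow> 'a::field"
  assumes "\<forall>i. f i \<noteq> 0"
  shows "matrix_inv (diag_mat f) = diag_mat (\<lambda>i. inverse (f i))"
proof -
  let ?D = "diag_mat (\<lambda>i. inverse (f i))"
  have id: "diag_mat f ** ?D = mat 1" "?D ** diag_mat f = mat 1"
    unfolding diag_mat_mult_diag_mat using assms by (simp_all add: diag_mat_def mat_def)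
  then have inv: "diag_mat f ** matrix_inv (diag_mat f) = mat 1 \<and> matrix_inv (diag_mat f) ** diag_mat f = mat 1"
    unfolding matrix_inv_def by (rule someI[of _ ?D, OF conjI])
  have "matrix_inv (diag_mat f) = matrix_inv (diag_mat f) ** (diag_mat f ** ?D)"
    using id by simp
  also have "\<dots> = ?D"
    using inv by (simp add: matrix_mul_assoc)
  finally show ?thesis .
qed

lemma inner_diag_mat_vector_mult:
  fixes r :: "real^'n"
  shows "r \<bullet> (diag_mat f *v r) = (\<Sum>i\<in>UNIV. f i * (r $ i)\<^sup>2)"
  by (simp add: inner_vec_def diag_mat_vector_mult_nth power2_eq_square mult_ac)

lemma pos_def_diagonal_pos:
  fixes C :: "real^'n^'n"
  assumes "\<forall>z. z \<noteq> 0 \<longrightarrow> 0 < z \<bullet> (C *v z)"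
  shows "0 < C $ i $ i"
proof -
  have "0 < axis i 1 \<bullet> (C *v axis i 1)"
    using assms by (simp add: axis_eq_0_iff)
  also have "axis i 1 \<bullet> (C *v axis i 1) = C $ i $ i"
    by (simp add: matrix_vector_mult_basis inner_axis' column_def)
  finally show ?thesis .
qed

lemma sum_UNIV_Plus:
  "(\<Sum>i\<in>(UNIV::('a::finite + 'b::finite) set). g i) = (\<Sum>k\<in>UNIV. g (Inl k)) + (\<Sum>k\<in>UNIV. g (Inr k))"
  by (subst UNIV_Plus_UNIV[symmetric], subst sum.Plus) (simp_all add: o_def)

lemma stack_vec_diff: "stack_vec (u - w) = stack_vec u - stack_vec w"
  by (simp add: vec_eq_iff stack_vec_def split: sum.splits)

lemma stack_mat_vector_mult:
  "stack_mat M *v x = stack_vec (M *v (\<chi> j. complex_of_real (x $ j)))"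
  by (simp add: vec_eq_iff stack_mat_def stack_vec_def matrix_vector_mult_def Re_sum Im_sum
      split: sum.splits)

lemma inner_stack_vec_diag_mat:
  assumes "\<forall>k. c (Inl k) = c (Inr k)"
  shows "stack_vec u \<bullet> (diag_mat c *v stack_vec u) = (\<Sum>k\<in>UNIV. c (Inl k) * (cmod (u $ k))\<^sup>2)"
  using assms
  by (simp add: inner_diag_mat_vector_mult sum_UNIV_Plus stack_vec_def cmod_power2
      distrib_left sum.distrib)

lemma norm_stack_vec_power2: "(norm (stack_vec (u :: complex^'m::finite)))\<^sup>2 = (\<Sum>k\<in>UNIV. (cmod (u $ k))\<^sup>2)"
proof -
  have "diag_mat (\<lambda>_. 1) = (mat 1 :: real^('m+'m)^('m+'m))"
    by (simp add: diag_mat_def mat_def)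
  then have "(norm (stack_vec u))\<^sup>2 = stack_vec u \<bullet> (diag_mat (\<lambda>_. 1) *v stack_vec u)"
    by (simp add: power2_norm_eq_inner)
  then show ?thesis
    by (simp add: inner_stack_vec_diag_mat)
qed

lemma matrix_inv_pos_def_diagonal:
  fixes C :: "real^'n^'n"
  assumes "\<forall>z. z \<noteq> 0 \<longrightarrow> 0 < z \<bullet> (C *v z)"
    and "\<forall>i j. i \<noteq> j \<longrightarrow> C $ i $ j = 0"
  shows "matrix_inv C = diag_mat (\<lambda>i. inverse (C $ i $ i))"
proof -
  have "\<forall>i. C $ i $ i \<noteq> 0"
    using pos_def_diagonal_pos[OF assms(1)] by (simp add: less_imp_neq[symmetric])
  then show ?thesis
    by (subst diag_mat_eq[OF assms(2)]) (simp add: matrix_inv_diag_mat)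
qed

lemma feasible_diag_scaling_iff:
  fixes C :: "real^('m::finite + 'm)^('m + 'm)" and f :: "'m \<Rightarrow> complex"
  assumes C_pd: "\<forall>z. z \<noteq> 0 \<longrightarrow> 0 < z \<bullet> (C *v z)"
    and C_diag: "\<forall>i j. i \<noteq> j \<longrightarrow> C $ i $ j = 0"
    and C_eq: "\<forall>j. C $ Inl j $ Inl j = C $ Inr j $ Inr j"
    and f_norm: "\<forall>k. cmod (f k) = s" and "s \<noteq> 0"
  shows "feasible C \<epsilon> (diag_mat f ** M) (diag_mat f *v w) x \<longleftrightarrow> feasible C \<epsilon> M w x"
proof -
  let ?c = "\<lambda>k. inverse (C $ Inl k $ Inl k)"
  let ?x = "\<chi> j. complex_of_real (x $ j)"
  have quad: "stack_vec u \<bullet> (matrix_inv C *v stack_vec u) = (\<Sum>k\<in>UNIV. ?c k * (cmod (u $ k))\<^sup>2)"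
    for u :: "complex^'m"
    using C_eq by (simp add: matrix_inv_pos_def_diagonal[OF C_pd C_diag] inner_stack_vec_diag_mat)
  have scale: "(\<Sum>k\<in>UNIV. g k * (cmod ((diag_mat f *v u) $ k))\<^sup>2) =
      s\<^sup>2 * (\<Sum>k\<in>UNIV. g k * (cmod (u $ k))\<^sup>2)" for g and u :: "complex^'m"
    by (simp add: diag_mat_vector_mult_nth norm_mult f_norm power_mult_distrib sum_distrib_left mult_ac)
  have residual: "(diag_mat f ** M) *v ?x - diag_mat f *v w = diag_mat f *v (M *v ?x - w)"
    by (simp add: matrix_vector_mul_assoc matrix_vector_mult_diff_distrib)
  have "s\<^sup>2 * a \<le> \<epsilon>\<^sup>2 * (s\<^sup>2 * b) \<longleftrightarrow> a \<le> \<epsilon>\<^sup>2 * b" for a b :: real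
    using \<open>s \<noteq> 0\<close> by (simp add: mult.left_commute[of "\<epsilon>\<^sup>2"])
  then show ?thesis
    unfolding feasible_def Let_def stack_mat_vector_mult stack_vec_diff[symmetric] residual quad
      norm_stack_vec_power2 scale[where g = ?c] scale[where g = "\<lambda>_. 1", simplified]
    by simp
qed

lemma is_solution_diag_scaling_iff:
  fixes C :: "real^('m::finite + 'm)^('m + 'm)" and f :: "'m \<Rightarrow> complex"
  assumes "\<forall>z. z \<noteq> 0 \<longrightarrow> 0 < z \<bullet> (C *v z)"
    and "\<forall>i j. i \<noteq> j \<longrightarrow> C $ i $ j = 0"
    and "\<forall>j. C $ Inl j $ Inl j = C $ Inr j $ Inr j"
    and "\<forall>k. cmod (f k) = s" and "s \<noteq> 0"
  shows "is_solution C \<epsilon> (diag_mat f ** M) (diag_mat f *v w) x \<longleftrightarrow> is_solution C \<epsilon> M w x"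
  unfolding is_solution_def feasible_diag_scaling_iff[OF assms] ..

lemma F_mat_eq_diag_mat_modulus:
  assumes "0 < s"
  obtains f where "F_mat lam s \<Delta> = diag_mat f" and "\<forall>k. cmod (f k) = s"
proof
  show "F_mat lam s \<Delta> =
      diag_mat (\<lambda>k. of_real s * exp (- 2 * of_real pi * \<i> * of_real \<Delta> / of_real (lam $ k)))"
    unfolding F_mat_def diag_mat_def ..
  show "\<forall>k. cmod (of_real s * exp (- 2 * of_real pi * \<i> * of_real \<Delta> / of_real (lam $ k))) = s"
    using assms by (simp add: norm_mult norm_exp_eq_Re)
qed

theorem theorem1:
  fixes lam :: "real^'m" and d :: "real^'n" and v :: "complex^'m"
    and \<epsilon> s \<Delta> :: real and C :: "real^('m+'m)^('m+'m)"
    and xstar xs :: "real^'n"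
  assumes lam_pos: "\<forall>k. 0 < lam $ k"
    and eps_pos: "0 < \<epsilon>"
    and s_pos: "0 < s"
    and C_sym: "transpose C = C"
    and C_pd: "\<forall>z. z \<noteq> 0 \<longrightarrow> 0 < z \<bullet> (C *v z)"
    and C_diag: "\<forall>i j. i \<noteq> j \<longrightarrow> C $ i $ j = 0"
    and C_eq: "\<forall>j. C $ Inl j $ Inl j = C $ Inr j $ Inr j"
    and xstar_sol: "is_solution C \<epsilon> (Phi_mat lam d) v xstar"
    and xstar_uniq: "\<forall>y. is_solution C \<epsilon> (Phi_mat lam d) v y \<longrightarrow> y = xstar"
    and xs_sol: "is_solution C \<epsilon> (F_mat lam s \<Delta> ** Phi_mat lam d) (F_mat lam s \<Delta> *v v) xs"
    and xs_uniq: "\<forall>y. is_solution C \<epsilon> (F_mat lam s \<Delta> ** Phi_mat lam d) (F_mat lam s \<Delta> *v v) y \<longrightarrow> y = xs"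
  shows "xs = xstar"
proof -
  obtain f where F: "F_mat lam s \<Delta> = diag_mat f" and f_norm: "\<forall>k. cmod (f k) = s"
    using F_mat_eq_diag_mat_modulus[OF s_pos] .
  have "is_solution C \<epsilon> (Phi_mat lam d) v xs"
    using xs_sol s_pos unfolding F
    by (simp add: is_solution_diag_scaling_iff[OF C_pd C_diag C_eq f_norm])
  then show ?thesis
    using xstar_uniq by simp
qed

end
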